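(* Let $r>0$ and let $\varphi:[0,r]\to(-\infty,0]$ be a non-increasing function such that $\varphi(x)/x\to0$ as $x\searrow0$. Let $\alpha:\mathbb{R}\to(-\infty,0]$ be given by $$\alpha(x)=\sup\Big\{ax^2+c:\ a,c\le0,\ ay^2+c\le\varphi(y)\text{ for }0\le y\le r\Big\},\qquad x\in\mathbb{R}.$$ Then (1) $\alpha$ is Lipschitz and $\alpha(x)/x\to0$ as $x\to0$; (2) $\alpha'(x)/x$ is non-decreasing on its domain (the set of $x>0$ where $\alpha'$ exists) for $x>0$; (3) $\displaystyle\int_0^\infty\frac{\alpha(x)}{x^2}\,dx\ge 2\frac{\varphi(r)}{r}+3\int_0^r\frac{\varphi(x)}{x^2}\,dx.$ *)

theory Defs
  imports "HOL-Analysis.Analysis"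
begin

definition alpha_fun :: "(real \<Rightarrow> real) \<Rightarrow> real \<Rightarrow> real \<Rightarrow> real" where
  "alpha_fun \<phi> r x = Sup {a * x\<^sup>2 + c | a c. a \<le> 0 \<and> c \<le> 0 \<and> (\<forall>y\<in>{0..r}. a * y\<^sup>2 + c \<le> \<phi> y)}"

end

theory Submission
  imports Defs
begin

text \<open>In the variable \<open>t = x\<^sup>2\<close> the function \<open>\<alpha>\<close> is a supremum of affine functions
  \<open>a t + c\<close>, hence convex; this gives the monotonicity of \<open>\<alpha>'(x)/x\<close>, and together with
  \<open>\<alpha>(0) \<le> 0\<close> also that of \<open>\<alpha>(x)/x\<^sup>2\<close>. Parabolas tangent to the lines \<open>y \<mapsto> -\<epsilon> y\<close> show
  \<open>\<alpha>(x) \<ge> -\<epsilon> x\<close> near \<open>0\<close>, which yields the limit and, combined with the monotonicity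
  of \<open>\<alpha>(x)/x\<^sup>2\<close>, the Lipschitz bound.

  For the integral write \<open>\<psi> = -\<phi>\<close> and \<open>J(x) = \<integral>\<^sub>x\<^sup>r \<psi>(u)/u\<^sup>3 du\<close>. For \<open>0 < x \<le> r\<close> the
  parabola through \<open>(x, \<phi>(x))\<close> with leading coefficient \<open>-(\<psi>(r)/r\<^sup>2 + 2 J(x))\<close> lies below
  \<open>\<phi>\<close>, because \<open>J(x) \<ge> J(y) \<ge> \<psi>(y) (1/y\<^sup>2 - 1/r\<^sup>2)/2\<close> for \<open>x < y \<le> r\<close>. Hence
  \<open>-\<alpha>(x)/x\<^sup>2 \<le> \<psi>(x)/x\<^sup>2 + \<psi>(r)/r\<^sup>2 + 2 J(x)\<close>, and by Tonelli \<open>\<integral>\<^sub>0\<^sup>r J = \<integral>\<^sub>0\<^sup>r \<psi>(u)/u\<^sup>2 du\<close>.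
  Beyond \<open>r\<close> the bound \<open>\<alpha> \<ge> \<phi>(r)\<close> contributes another \<open>\<psi>(r)/r\<close>.\<close>

lemma nn_integral_inverse_square_atLeast:
  fixes c r :: real
  assumes "0 < r" "0 \<le> c"
  shows "(\<integral>\<^sup>+x\<in>{r..}. ennreal (c / x\<^sup>2) \<partial>lborel) = ennreal (c / r)"
proof -
  have "((\<lambda>x. x powr (-2)) has_integral -(r powr (-2+1)) / (-2+1)) {r..}"
    using assms by (intro has_integral_powr_to_inf) auto
  then have "((\<lambda>x. c * x powr (-2)) has_integral c / r) {r..}"
    using assms by (auto dest: has_integral_mult_right[where c=c] simp: powr_minus divide_inverse)
  then have "((\<lambda>x. c / x\<^sup>2) has_integral c / r) {r..}"
    using assms by (subst has_integral_cong[where g="\<lambda>x. c * x powr (-2)"])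
      (auto simp: powr_minus divide_inverse powr_numeral)
  then show ?thesis
    using assms by (intro nn_integral_has_integral_lebesgue') auto
qed

lemma nn_integral_inverse_cube_Icc:
  fixes c y r :: real
  assumes "0 < y" "y \<le> r" "0 \<le> c"
  shows "(\<integral>\<^sup>+u\<in>{y..r}. ennreal (c / u^3) \<partial>lborel) = ennreal (c * (1/y\<^sup>2 - 1/r\<^sup>2) / 2)"
proof -
  have "((\<lambda>u. c / u^3) has_integral (- c / (2 * r\<^sup>2)) - (- c / (2 * y\<^sup>2))) {y..r}"
  proof (rule fundamental_theorem_of_calculus)
    fix u assume "u \<in> {y..r}"
    then have "0 < u" using assms by auto
    then show "((\<lambda>u. - c / (2 * u\<^sup>2)) has_vector_derivative c / u^3) (at u within {y..r})"
      by (auto intro!: derivative_eq_intros simp: has_real_derivative_iff_has_vector_derivative[symmetric]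
          field_simps power2_eq_square power3_eq_cube)
  qed (use assms in auto)
  moreover have "(- c / (2 * r\<^sup>2)) - (- c / (2 * y\<^sup>2)) = c * (1/y\<^sup>2 - 1/r\<^sup>2) / 2"
    using assms by (simp add: field_simps)
  ultimately have "((\<lambda>u. c / u^3) has_integral c * (1/y\<^sup>2 - 1/r\<^sup>2) / 2) {y..r}"
    by (simp only:)
  then show ?thesis
    using assms by (intro nn_integral_has_integral_lebesgue') auto
qed

lemma nn_integral_triangle_swap:
  fixes f :: "real \<Rightarrow> ennreal"
  assumes [measurable]: "f \<in> borel_measurable borel"
  shows "(\<integral>\<^sup>+x\<in>{0<..r}. (\<integral>\<^sup>+u\<in>{x..r}. f u \<partial>lborel) \<partial>lborel)
       = (\<integral>\<^sup>+u\<in>{0<..r}. ennreal u * f u \<partial>lborel)"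
proof -
  have [measurable]: "(\<lambda>(x, u). f u * indicator {x..r} u * indicator {0<..r} x)
      \<in> borel_measurable (lborel \<Otimes>\<^sub>M lborel)"
  proof -
    have "(\<lambda>(x, u). f u * indicator {x..r} u * indicator {0<..r} x) =
        (\<lambda>p. f (snd p) * indicator {p. fst p \<le> snd p \<and> snd p \<le> r} p * indicator {0<..r} (fst p))"
      by (auto simp: fun_eq_iff split: split_indicator)
    then show ?thesis by simp
  qed
  have "(\<integral>\<^sup>+x\<in>{0<..r}. (\<integral>\<^sup>+u\<in>{x..r}. f u \<partial>lborel) \<partial>lborel)
      = (\<integral>\<^sup>+x. (\<integral>\<^sup>+u. f u * indicator {x..r} u * indicator {0<..r} x \<partial>lborel) \<partial>lborel)"
    by (intro nn_integral_cong nn_integral_multc[symmetric]) measurable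
  also have "\<dots> = (\<integral>\<^sup>+u. (\<integral>\<^sup>+x. f u * indicator {x..r} u * indicator {0<..r} x \<partial>lborel) \<partial>lborel)"
    by (rule lborel_pair.Fubini'[symmetric]) measurable
  also have "\<dots> = (\<integral>\<^sup>+u\<in>{0<..r}. ennreal u * f u \<partial>lborel)"
  proof (rule nn_integral_cong)
    fix u :: real
    have "(\<integral>\<^sup>+x. f u * indicator {x..r} u * indicator {0<..r} x \<partial>lborel)
        = (\<integral>\<^sup>+x. (f u * indicator {0<..r} u) * indicator {0<..u} x \<partial>lborel)"
      by (intro nn_integral_cong) (auto split: split_indicator)
    also have "\<dots> = f u * indicator {0<..r} u * emeasure lborel {0<..u}"
      by (rule nn_integral_cmult_indicator) simp
    also have "\<dots> = ennreal u * f u * indicator {0<..r} u"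
      by (cases "0 < u") (auto simp: mult.commute split: split_indicator)
    finally show "(\<integral>\<^sup>+x. f u * indicator {x..r} u * indicator {0<..r} x \<partial>lborel)
        = ennreal u * f u * indicator {0<..r} u" .
  qed
  finally show ?thesis .
qed

lemma borel_measurable_set_nn_integral_atLeastAtMost:
  fixes f :: "real \<Rightarrow> ennreal"
  assumes [measurable]: "f \<in> borel_measurable borel"
  shows "(\<lambda>x. \<integral>\<^sup>+u\<in>{x..r}. f u \<partial>lborel) \<in> borel_measurable borel"
proof -
  have "(\<lambda>(x, u). f u * indicator {x..r} u) = (\<lambda>p. f (snd p) * indicator {p. fst p \<le> snd p \<and> snd p \<le> r} p)"
    by (auto simp: fun_eq_iff split: split_indicator)
  then have "(\<lambda>(x, u). f u * indicator {x..r} u) \<in> borel_measurable (lborel \<Otimes>\<^sub>M lborel)"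
    by simp
  then show ?thesis
    using lborel.borel_measurable_nn_integral[of "\<lambda>x u. f u * indicator {x..r} u" lborel] by simp
qed

locale parabola_envelope =
  fixes \<phi> :: "real \<Rightarrow> real" and r :: real
  assumes r_pos: "r > 0"
    and phi_nonpos: "\<forall>x\<in>{0..r}. \<phi> x \<le> 0"
    and phi_noninc: "\<forall>x\<in>{0..r}. \<forall>y\<in>{0..r}. x \<le> y \<longrightarrow> \<phi> y \<le> \<phi> x"
begin

abbreviation \<alpha> :: "real \<Rightarrow> real" where "\<alpha> \<equiv> alpha_fun \<phi> r"

definition admissible :: "real \<Rightarrow> real \<Rightarrow> bool" where
  "admissible a c \<longleftrightarrow> a \<le> 0 \<and> c \<le> 0 \<and> (\<forall>y\<in>{0..r}. a * y\<^sup>2 + c \<le> \<phi> y)"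

lemma admissible_const: "admissible 0 (\<phi> r)"
  using r_pos phi_nonpos phi_noninc unfolding admissible_def by auto

lemma admissible_nonpos:
  assumes "admissible a c" shows "a * x\<^sup>2 + c \<le> 0"
  using assms unfolding admissible_def by (simp add: add_nonpos_nonpos mult_nonpos_nonneg)

lemma admissible_le_alpha:
  assumes "admissible a c" shows "a * x\<^sup>2 + c \<le> \<alpha> x"
  unfolding alpha_fun_def
proof (rule cSup_upper)
  show "a * x\<^sup>2 + c \<in> {a * x\<^sup>2 + c |a c. a \<le> 0 \<and> c \<le> 0 \<and> (\<forall>y\<in>{0..r}. a * y\<^sup>2 + c \<le> \<phi> y)}"
    using assms unfolding admissible_def by blast
qed (auto intro!: bdd_aboveI[where M=0] admissible_nonpos simp: admissible_def)

lemma alpha_le: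
  assumes "\<And>a c. admissible a c \<Longrightarrow> a * x\<^sup>2 + c \<le> B" shows "\<alpha> x \<le> B"
  unfolding alpha_fun_def
  using admissible_const assms unfolding admissible_def by (intro cSup_least) blast+

lemma alpha_nonpos: "\<alpha> x \<le> 0"
  by (rule alpha_le) (rule admissible_nonpos)

lemma phi_r_le_alpha: "\<phi> r \<le> \<alpha> x"
  using admissible_le_alpha[OF admissible_const, of x] by simp

lemma alpha_abs: "\<alpha> \<bar>x\<bar> = \<alpha> x"
  unfolding alpha_fun_def by simp

lemma alpha_antimono:
  assumes "\<bar>x\<bar> \<le> \<bar>y\<bar>" shows "\<alpha> y \<le> \<alpha> x"
proof (rule alpha_le)
  fix a c assume ac: "admissible a c"
  have "x\<^sup>2 \<le> y\<^sup>2" using assms by (simp add: abs_le_square_iff)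
  then have "a * y\<^sup>2 + c \<le> a * x\<^sup>2 + c"
    using ac unfolding admissible_def by (simp add: mult_left_mono_neg)
  also have "\<dots> \<le> \<alpha> x" by (rule admissible_le_alpha[OF ac])
  finally show "a * y\<^sup>2 + c \<le> \<alpha> x" .
qed

lemma convex_on_alpha_sqrt: "convex_on {0..} (\<lambda>t. \<alpha> (sqrt t))"
proof (rule convex_onI)
  fix t u v :: real assume t: "0 < t" "t < 1" and uv: "u \<in> {0..}" "v \<in> {0..}"
  have "\<alpha> (sqrt ((1 - t) * u + t * v)) \<le> (1 - t) * \<alpha> (sqrt u) + t * \<alpha> (sqrt v)"
  proof (rule alpha_le)
    fix a c assume ac: "admissible a c"
    have "0 \<le> (1 - t) * u + t * v"
      using t uv by simp
    then have "a * (sqrt ((1 - t) * u + t * v))\<^sup>2 + c = a * ((1 - t) * u + t * v) + c"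
      by simp
    also have "\<dots> = (1 - t) * (a * (sqrt u)\<^sup>2 + c) + t * (a * (sqrt v)\<^sup>2 + c)"
      using uv by (simp add: algebra_simps)
    also have "\<dots> \<le> (1 - t) * \<alpha> (sqrt u) + t * \<alpha> (sqrt v)"
      using t by (intro add_mono mult_left_mono admissible_le_alpha[OF ac]) auto
    finally show "a * (sqrt ((1 - t) * u + t * v))\<^sup>2 + c \<le> \<dots>" .
  qed
  then show "\<alpha> (sqrt ((1 - t) *\<^sub>R u + t *\<^sub>R v)) \<le> (1 - t) * \<alpha> (sqrt u) + t * \<alpha> (sqrt v)"
    by simp
qed (rule convex_real_interval)

lemma alpha_div_square_mono:
  assumes "0 < x" "x \<le> y" shows "\<alpha> x / x\<^sup>2 \<le> \<alpha> y / y\<^sup>2"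
proof -
  define t where "t = x\<^sup>2 / y\<^sup>2"
  have t: "0 \<le> t" "t \<le> 1" and "x = sqrt ((1 - t) * 0 + t * y\<^sup>2)"
    using assms by (auto simp: t_def power_mono real_sqrt_divide)
  then have "\<alpha> x \<le> (1 - t) * \<alpha> (sqrt 0) + t * \<alpha> (sqrt (y\<^sup>2))"
    using convex_onD[OF convex_on_alpha_sqrt, of t 0 "y\<^sup>2"] by simp
  also have "\<dots> \<le> t * \<alpha> y"
    using t alpha_nonpos[of 0] alpha_abs[of y] by (simp add: mult_nonneg_nonpos)
  finally show ?thesis
    using assms by (simp add: t_def field_simps)
qed

lemma alpha_above_tangent:
  assumes "0 < x" "0 < y" and D: "(\<alpha> has_real_derivative D) (at x)"
  shows "D / (2 * x) * (y\<^sup>2 - x\<^sup>2) \<le> \<alpha> y - \<alpha> x"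
proof -
  have "((\<lambda>t. \<alpha> (sqrt t)) has_real_derivative D * (inverse (sqrt (x\<^sup>2)) / 2)) (at (x\<^sup>2))"
    using assms by (intro DERIV_chain2[where f=\<alpha>] DERIV_real_sqrt) auto
  then have "D * (inverse (sqrt (x\<^sup>2)) / 2) * (y\<^sup>2 - x\<^sup>2) \<le> \<alpha> (sqrt (y\<^sup>2)) - \<alpha> (sqrt (x\<^sup>2))"
    using assms by (intro convex_on_imp_above_tangent[OF convex_on_alpha_sqrt])
      (auto simp: interior_real_atLeast has_field_derivative_at_within)
  then show ?thesis
    using assms by (simp add: field_simps)
qed

lemma deriv_alpha_div_mono:
  assumes "0 < x" "x \<le> y" "\<alpha> differentiable (at x)" "\<alpha> differentiable (at y)"
  shows "deriv \<alpha> x / x \<le> deriv \<alpha> y / y"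
proof (cases "x = y")
  case False
  then have "x < y" using assms by simp
  have "(\<alpha> has_real_derivative deriv \<alpha> x) (at x)" "(\<alpha> has_real_derivative deriv \<alpha> y) (at y)"
    using assms(3,4) by (simp_all add: DERIV_deriv_iff_real_differentiable)
  from this[THEN alpha_above_tangent[rotated 2]]
  have "deriv \<alpha> x / (2 * x) * (y\<^sup>2 - x\<^sup>2) \<le> \<alpha> y - \<alpha> x"
    and "deriv \<alpha> y / (2 * y) * (x\<^sup>2 - y\<^sup>2) \<le> \<alpha> x - \<alpha> y"
    using assms by auto
  then have "deriv \<alpha> x / (2 * x) * (y\<^sup>2 - x\<^sup>2) \<le> deriv \<alpha> y / (2 * y) * (y\<^sup>2 - x\<^sup>2)"
    by (simp add: right_diff_distrib)
  moreover have "0 < y\<^sup>2 - x\<^sup>2"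
    using \<open>x < y\<close> assms by (simp add: power_strict_mono)
  ultimately have "deriv \<alpha> x / (2 * x) \<le> deriv \<alpha> y / (2 * y)"
    by (rule mult_right_le_imp_le)
  then show ?thesis
    by (simp add: divide_le_cancel)
qed simp

text \<open>Clamping the argument to \<open>[0, r]\<close> extends \<open>-\<phi>\<close> to a non-decreasing, hence Borel
  measurable, function on the whole line.\<close>
definition \<psi> :: "real \<Rightarrow> real" where
  "\<psi> x = - \<phi> (min r (max 0 x))"

lemma psi_nonneg: "0 \<le> \<psi> x"
  unfolding \<psi>_def using phi_nonpos r_pos by auto

lemma mono_psi: "mono \<psi>"
  unfolding mono_def \<psi>_def using phi_noninc r_pos by (auto simp: min_def max_def)

lemma borel_measurable_psi [measurable]: "\<psi> \<in> borel_measurable borel"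
  using mono_psi by (rule borel_measurable_mono)

lemma psi_eq: "x \<in> {0..r} \<Longrightarrow> \<psi> x = - \<phi> x"
  unfolding \<psi>_def by auto

definition psi_tail :: "real \<Rightarrow> ennreal" where
  "psi_tail x = (\<integral>\<^sup>+u\<in>{x..r}. ennreal (\<psi> u / u^3) \<partial>lborel)"

lemma borel_measurable_psi_tail [measurable]: "psi_tail \<in> borel_measurable borel"
  unfolding psi_tail_def[abs_def]
  by (rule borel_measurable_set_nn_integral_atLeastAtMost) measurable

lemma psi_tail_antimono: "x \<le> y \<Longrightarrow> psi_tail y \<le> psi_tail x"
  unfolding psi_tail_def by (intro nn_integral_mono) (auto split: split_indicator)

lemma psi_tail_finite:
  assumes "0 < x" shows "psi_tail x < \<infinity>"
proof -
  have "psi_tail x \<le> (\<integral>\<^sup>+u\<in>{x..r}. ennreal (\<psi> r / x^3) \<partial>lborel)"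
    unfolding psi_tail_def
  proof (intro nn_integral_mono)
    fix u
    have "\<psi> u / u^3 \<le> \<psi> r / x^3" if "u \<in> {x..r}"
      using that assms psi_nonneg[of u] psi_nonneg[of r] mono_psi
      by (intro frac_le power_mono) (auto simp: mono_def)
    then show "ennreal (\<psi> u / u^3) * indicator {x..r} u \<le> ennreal (\<psi> r / x^3) * indicator {x..r} u"
      by (auto simp: ennreal_leI split: split_indicator)
  qed
  also have "\<dots> = ennreal (\<psi> r / x^3) * emeasure lborel {x..r}"
    by (rule nn_integral_cmult_indicator) simp
  also have "\<dots> < \<infinity>"
    by (simp add: emeasure_lborel_Icc_eq ennreal_mult_less_top)
  finally show ?thesis .
qed

lemma psi_le_psi_tail:
  assumes "0 < y" "y \<le> r"
  shows "ennreal (\<psi> y * (1/y\<^sup>2 - 1/r\<^sup>2) / 2) \<le> psi_tail y"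
proof -
  have "ennreal (\<psi> y * (1/y\<^sup>2 - 1/r\<^sup>2) / 2) = (\<integral>\<^sup>+u\<in>{y..r}. ennreal (\<psi> y / u^3) \<partial>lborel)"
    using nn_integral_inverse_cube_Icc[OF assms psi_nonneg] by simp
  also have "\<dots> \<le> psi_tail y"
    unfolding psi_tail_def
  proof (intro nn_integral_mono)
    fix u
    have "\<psi> y / u^3 \<le> \<psi> u / u^3" if "u \<in> {y..r}"
      using that assms mono_psi by (intro divide_right_mono) (auto simp: mono_def)
    then show "ennreal (\<psi> y / u^3) * indicator {y..r} u \<le> ennreal (\<psi> u / u^3) * indicator {y..r} u"
      by (auto simp: ennreal_leI split: split_indicator)
  qed
  finally show ?thesis .
qed

lemma neg_alpha_div_square_le:
  assumes x: "0 < x" "x \<le> r"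
  shows "ennreal (- \<alpha> x / x\<^sup>2) \<le> ennreal (\<psi> x / x\<^sup>2) + ennreal (\<psi> r / r\<^sup>2) + 2 * psi_tail x"
proof -
  obtain e where e: "0 \<le> e" "psi_tail x = ennreal e"
    using psi_tail_finite[OF x(1)] by (cases "psi_tail x") auto
  define A where "A = \<psi> r / r\<^sup>2 + 2 * e"
  have A: "0 \<le> A"
    using e psi_nonneg[of r] by (simp add: A_def)
  have steep: "\<psi> y \<le> A * y\<^sup>2" if y: "x < y" "y \<le> r" for y
  proof -
    have "ennreal (\<psi> y * (1/y\<^sup>2 - 1/r\<^sup>2) / 2) \<le> psi_tail y"
      using x y by (intro psi_le_psi_tail) auto
    also have "\<dots> \<le> psi_tail x"
      using y by (intro psi_tail_antimono) simp
    finally have tail: "\<psi> y * (1/y\<^sup>2 - 1/r\<^sup>2) / 2 \<le> e"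
      using e by simp
    have "\<psi> y = \<psi> y * (1/y\<^sup>2 - 1/r\<^sup>2) / 2 * (2 * y\<^sup>2) + \<psi> y * y\<^sup>2 / r\<^sup>2"
      using x y by (simp add: field_simps)
    also have "\<dots> \<le> e * (2 * y\<^sup>2) + \<psi> r * y\<^sup>2 / r\<^sup>2"
      using tail y mono_psi by (intro add_mono mult_right_mono divide_right_mono) (auto simp: mono_def)
    also have "\<dots> = A * y\<^sup>2"
      by (simp add: A_def algebra_simps)
    finally show ?thesis .
  qed
  have "admissible (- A) (\<phi> x)"
    unfolding admissible_def
  proof (intro conjI ballI)
    show "\<phi> x \<le> 0" using phi_nonpos x by auto
    fix y assume y: "y \<in> {0..r}"
    show "- A * y\<^sup>2 + \<phi> x \<le> \<phi> y"
    proof (cases "y \<le> x")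
      case True
      then have "\<phi> x \<le> \<phi> y"
        using phi_noninc x y by auto
      moreover have "0 \<le> A * y\<^sup>2"
        using A by simp
      ultimately show ?thesis by simp
    next
      case False
      then show ?thesis
        using steep[of y] y x psi_eq[of x] psi_eq[of y] psi_nonneg[of x] by auto
    qed
  qed (use A in simp)
  then have "- A * x\<^sup>2 + \<phi> x \<le> \<alpha> x"
    by (rule admissible_le_alpha)
  then have "- \<alpha> x / x\<^sup>2 \<le> \<psi> x / x\<^sup>2 + \<psi> r / r\<^sup>2 + 2 * e"
    using x psi_eq[of x] by (simp add: A_def field_simps)
  then have "ennreal (- \<alpha> x / x\<^sup>2) \<le> ennreal (\<psi> x / x\<^sup>2 + \<psi> r / r\<^sup>2 + 2 * e)"
    by (rule ennreal_leI)
  also have "\<dots> = ennreal (\<psi> x / x\<^sup>2) + ennreal (\<psi> r / r\<^sup>2) + 2 * psi_tail x"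
    using e psi_nonneg[of x] psi_nonneg[of r] by (simp add: ennreal_plus ennreal_mult)
  finally show ?thesis .
qed

lemma set_nn_integral_psi_tail:
  "(\<integral>\<^sup>+x\<in>{0<..r}. psi_tail x \<partial>lborel) = (\<integral>\<^sup>+x\<in>{0<..r}. ennreal (\<psi> x / x\<^sup>2) \<partial>lborel)"
proof -
  have "(\<integral>\<^sup>+x\<in>{0<..r}. psi_tail x \<partial>lborel)
      = (\<integral>\<^sup>+x\<in>{0<..r}. ennreal x * ennreal (\<psi> x / x^3) \<partial>lborel)"
    unfolding psi_tail_def by (rule nn_integral_triangle_swap) measurable
  also have "\<dots> = (\<integral>\<^sup>+x\<in>{0<..r}. ennreal (\<psi> x / x\<^sup>2) \<partial>lborel)"
    using psi_nonneg
    by (intro nn_integral_cong) (auto simp: ennreal_mult[symmetric] power2_eq_square power3_eq_cube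
        split: split_indicator)
  finally show ?thesis .
qed

lemma nn_integral_neg_alpha_div_square_le:
  "(\<integral>\<^sup>+x\<in>{0<..}. ennreal (- \<alpha> x / x\<^sup>2) \<partial>lborel)
    \<le> ennreal (- 2 * \<phi> r / r) + 3 * (\<integral>\<^sup>+x\<in>{0<..r}. ennreal (- \<phi> x / x\<^sup>2) \<partial>lborel)"
proof -
  define I where "I = (\<integral>\<^sup>+x\<in>{0<..r}. ennreal (\<psi> x / x\<^sup>2) \<partial>lborel)"
  define near where
    "near x = ennreal (\<psi> x / x\<^sup>2) + ennreal (\<psi> r / r\<^sup>2) + 2 * psi_tail x" for x
  have [measurable]: "near \<in> borel_measurable borel"
    unfolding near_def by measurable
  have "ennreal (- \<alpha> x / x\<^sup>2) * indicator {0<..} x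
      \<le> near x * indicator {0<..r} x + ennreal (\<psi> r / x\<^sup>2) * indicator {r..} x" for x
  proof (cases "x \<le> r")
    case True
    then have "ennreal (- \<alpha> x / x\<^sup>2) * indicator {0<..} x \<le> near x * indicator {0<..r} x"
      using neg_alpha_div_square_le[of x] by (auto simp: near_def split: split_indicator)
    then show ?thesis
      by (rule order_trans[OF _ add_increasing2]) auto
  next
    case False
    have "- \<alpha> x / x\<^sup>2 \<le> \<psi> r / x\<^sup>2"
      using phi_r_le_alpha[of x] psi_eq[of r] r_pos by (intro divide_right_mono) auto
    then show ?thesis
      using False r_pos by (auto simp: ennreal_leI split: split_indicator)
  qed
  then have "(\<integral>\<^sup>+x\<in>{0<..}. ennreal (- \<alpha> x / x\<^sup>2) \<partial>lborel)
      \<le> (\<integral>\<^sup>+x\<in>{0<..r}. near x \<partial>lborel) + (\<integral>\<^sup>+x\<in>{r..}. ennreal (\<psi> r / x\<^sup>2) \<partial>lborel)"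
    by (subst nn_integral_add[symmetric]) (auto intro: nn_integral_mono)
  also have "(\<integral>\<^sup>+x\<in>{0<..r}. near x \<partial>lborel) = I + ennreal (\<psi> r / r\<^sup>2) * ennreal r + 2 * I"
    unfolding near_def I_def
    by (simp add: distrib_right nn_integral_add nn_integral_cmult nn_integral_cmult_indicator
        mult.assoc set_nn_integral_psi_tail[symmetric] emeasure_lborel_Ioc less_imp_le[OF r_pos])
  also have "(\<integral>\<^sup>+x\<in>{r..}. ennreal (\<psi> r / x\<^sup>2) \<partial>lborel) = ennreal (\<psi> r / r)"
    using r_pos psi_nonneg by (rule nn_integral_inverse_square_atLeast)
  also have "I + ennreal (\<psi> r / r\<^sup>2) * ennreal r + 2 * I + ennreal (\<psi> r / r)
      = ennreal (- 2 * \<phi> r / r) + 3 * I"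
  proof -
    have "ennreal (\<psi> r / r\<^sup>2) * ennreal r = ennreal (\<psi> r / r)"
      using r_pos psi_nonneg[of r] by (simp add: ennreal_mult[symmetric] power2_eq_square)
    moreover have "ennreal (- 2 * \<phi> r / r) = ennreal (\<psi> r / r) + ennreal (\<psi> r / r)"
      using r_pos psi_nonneg[of r] psi_eq[of r] by (subst ennreal_plus[symmetric]) (auto simp: divide_nonpos_pos)
    moreover have "3 * I = I + 2 * I"
      by (simp add: distrib_right[of 1 2 I, simplified])
    ultimately show ?thesis
      by (simp only: ac_simps)
  qed
  also have "I = (\<integral>\<^sup>+x\<in>{0<..r}. ennreal (- \<phi> x / x\<^sup>2) \<partial>lborel)"
    unfolding I_def by (intro nn_integral_cong) (auto simp: psi_eq split: split_indicator)
  finally show ?thesis .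
qed

lemma alpha_diff_le:
  assumes K: "0 \<le> K" "\<forall>x>0. - \<alpha> x \<le> K * x" and xy: "0 \<le> x" "x \<le> y"
  shows "\<alpha> x - \<alpha> y \<le> 3 * K * (y - x)"
proof (cases "2 * x \<le> y")
  case True
  show ?thesis
  proof (cases "y = 0")
    case False
    then have "- \<alpha> y \<le> K * y"
      using K(2) xy by simp
    then have "\<alpha> x - \<alpha> y \<le> K * y"
      using alpha_nonpos[of x] by linarith
    also have "\<dots> \<le> K * (3 * (y - x))"
      using True K xy by (intro mult_left_mono) auto
    also have "\<dots> = 3 * K * (y - x)"
      by simp
    finally show ?thesis .
  qed (use xy in simp)
next
  case False
  then have x: "0 < x" and "y < 2 * x"
    using xy by auto
  have "\<alpha> x * (y\<^sup>2 / x\<^sup>2) \<le> \<alpha> y"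
    using alpha_div_square_mono[OF x xy(2)] x xy by (simp add: field_simps)
  then have "\<alpha> x - \<alpha> y \<le> (- \<alpha> x) * ((y + x) * (y - x) / x\<^sup>2)"
    using x by (simp add: field_simps power2_eq_square)
  also have "\<dots> \<le> (K * x) * ((y + x) * (y - x) / x\<^sup>2)"
    using K x xy by (intro mult_right_mono) auto
  also have "\<dots> = K * (y - x) * ((y + x) / x)"
    using x by (simp add: field_simps power2_eq_square)
  also have "\<dots> \<le> K * (y - x) * 3"
    using K xy x \<open>y < 2 * x\<close> by (intro mult_left_mono) (auto simp: divide_le_eq)
  finally show ?thesis by simp
qed

lemma lipschitz_on_alpha:
  assumes K: "0 \<le> K" "\<forall>x>0. - \<alpha> x \<le> K * x"
  shows "(3 * K)-lipschitz_on UNIV \<alpha>"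
proof (rule lipschitz_onI)
  have nonneg: "\<bar>\<alpha> u - \<alpha> v\<bar> \<le> 3 * K * \<bar>u - v\<bar>" if "0 \<le> u" "0 \<le> v" for u v
  proof (cases "u \<le> v")
    case True
    then show ?thesis
      using alpha_antimono[of u v] alpha_diff_le[OF K that(1) True] that by simp
  next
    case False
    then show ?thesis
      using alpha_antimono[of v u] alpha_diff_le[OF K that(2), of u] that by simp
  qed
  fix x y :: real
  have "dist (\<alpha> x) (\<alpha> y) = \<bar>\<alpha> \<bar>x\<bar> - \<alpha> \<bar>y\<bar>\<bar>"
    by (simp add: alpha_abs dist_real_def)
  also have "\<dots> \<le> 3 * K * \<bar>\<bar>x\<bar> - \<bar>y\<bar>\<bar>"
    by (rule nonneg) auto
  also have "\<dots> \<le> 3 * K * dist x y"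
    using K by (intro mult_left_mono) (auto simp: dist_real_def)
  finally show "dist (\<alpha> x) (\<alpha> y) \<le> 3 * K * dist x y" .
qed (use K in simp)

end

locale sublinear_parabola_envelope = parabola_envelope +
  assumes phi_lim: "((\<lambda>x. \<phi> x / x) \<longlongrightarrow> 0) (at_right 0)"
begin

lemma phi_zero: "\<phi> 0 = 0"
proof -
  have "((\<lambda>x. \<phi> x / x * x) \<longlongrightarrow> 0 * 0) (at_right 0)"
    by (intro tendsto_mult phi_lim tendsto_ident_at)
  moreover have "eventually (\<lambda>x. \<phi> x / x * x = \<phi> x) (at_right (0::real))"
    by (simp add: eventually_at_right_less[THEN eventually_mono])
  ultimately have "(\<phi> \<longlongrightarrow> 0) (at_right 0)"
    by (simp add: tendsto_cong)
  moreover have "eventually (\<lambda>x. \<phi> x \<le> \<phi> 0) (at_right 0)"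
    using r_pos phi_noninc unfolding eventually_at_right_field by (intro exI[of _ r]) auto
  ultimately have "0 \<le> \<phi> 0"
    by (rule tendsto_upperbound) simp
  then show ?thesis
    using phi_nonpos r_pos by force
qed

text \<open>The parabola \<open>-\<epsilon> (y\<^sup>2 + x\<^sup>2) / (2x)\<close> touches the line \<open>y \<mapsto> -\<epsilon> y\<close> at \<open>y = x\<close> and
  lies below it; near \<open>0\<close> that line lies below \<open>\<phi>\<close>, and further out the parabola is steep
  enough once \<open>x\<close> is small.\<close>
lemma alpha_ge_linear:
  assumes e: "\<epsilon> > 0"
  shows "\<exists>d>0. \<forall>x. 0 < x \<and> x \<le> d \<longrightarrow> - \<epsilon> * x \<le> \<alpha> x"
proof -
  obtain d0 where d0: "d0 > 0" "\<And>y. 0 < y \<Longrightarrow> y < d0 \<Longrightarrow> \<bar>\<phi> y / y\<bar> < \<epsilon>"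
    using tendstoD[OF phi_lim e] unfolding eventually_at_right_field by auto
  define \<delta> where "\<delta> = min (d0 / 2) r"
  have \<delta>: "0 < \<delta>" "\<delta> \<le> r" "\<delta> < d0"
    using d0 r_pos by (auto simp: \<delta>_def)
  have below_line: "- \<epsilon> * y \<le> \<phi> y" if "0 \<le> y" "y \<le> \<delta>" for y
  proof (cases "y = 0")
    case False
    then have "0 < y"
      using that by simp
    then have "\<bar>\<phi> y / y\<bar> < \<epsilon>"
      using d0(2) that \<delta> by simp
    then have "- \<epsilon> < \<phi> y / y"
      using abs_less_iff[of "\<phi> y / y" \<epsilon>] by linarith
    then show ?thesis
      using \<open>0 < y\<close> by (simp add: less_divide_eq)
  qed (simp add: phi_zero)
  have phi_r: "\<phi> r \<le> 0"
    using phi_nonpos r_pos by auto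
  define d where "d = min \<delta> (\<epsilon> * \<delta>\<^sup>2 / (2 * (1 - \<phi> r)))"
  have "- \<epsilon> * x \<le> \<alpha> x" if x: "0 < x" "x \<le> d" for x
  proof -
    define a where "a = - \<epsilon> / (2 * x)"
    define c where "c = - \<epsilon> * x / 2"
    have a: "a \<le> 0" and c: "c \<le> 0"
      using e x by (simp_all add: a_def c_def)
    have "x * (2 * (1 - \<phi> r)) \<le> \<epsilon> * \<delta>\<^sup>2"
      using x phi_r by (simp add: d_def le_divide_eq)
    then have steep: "a * \<delta>\<^sup>2 \<le> \<phi> r - 1"
      using x by (simp add: a_def field_simps)
    have "admissible a c"
      unfolding admissible_def
    proof (intro conjI ballI a c)
      fix y assume y: "y \<in> {0..r}"
      show "a * y\<^sup>2 + c \<le> \<phi> y"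
      proof (cases "y \<le> \<delta>")
        case True
        have "a * y\<^sup>2 + c = - \<epsilon> * y - \<epsilon> * (y - x)\<^sup>2 / (2 * x)"
          using x by (simp add: a_def c_def field_simps power2_eq_square)
        also have "\<dots> \<le> - \<epsilon> * y"
          using e x by simp
        also have "\<dots> \<le> \<phi> y"
          using below_line y True by auto
        finally show ?thesis .
      next
        case False
        then have "a * y\<^sup>2 \<le> a * \<delta>\<^sup>2"
          using \<delta> a by (intro mult_left_mono_neg power_mono) auto
        moreover have "\<phi> r \<le> \<phi> y"
          using y phi_noninc r_pos by auto
        ultimately show ?thesis
          using steep c by linarith
      qed
    qed
    then have "a * x\<^sup>2 + c \<le> \<alpha> x"
      by (rule admissible_le_alpha)
    then show ?thesis
      using x by (simp add: a_def c_def field_simps power2_eq_square)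
  qed
  moreover have "d > 0"
    using \<delta> e phi_r by (auto simp: d_def)
  ultimately show ?thesis by blast
qed

lemma alpha_linear_bound: "\<exists>K\<ge>0. \<forall>x>0. - \<alpha> x \<le> K * x"
proof -
  obtain d where d: "d > 0" "\<And>x. 0 < x \<Longrightarrow> x \<le> d \<Longrightarrow> - 1 * x \<le> \<alpha> x"
    using alpha_ge_linear[of 1] by auto
  have "- \<alpha> x \<le> max 1 (- \<phi> r / d) * x" if x: "x > 0" for x
  proof (cases "x \<le> d")
    case True
    then have "- \<alpha> x \<le> 1 * x"
      using d x by force
    also have "\<dots> \<le> max 1 (- \<phi> r / d) * x"
      using x by (intro mult_right_mono) auto
    finally show ?thesis .
  next
    case False
    have "- \<alpha> x \<le> (- \<phi> r / d) * d"
      using phi_r_le_alpha[of x] d by simp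
    also have "\<dots> \<le> max 1 (- \<phi> r / d) * x"
      using False d phi_nonpos r_pos by (intro mult_mono) (auto simp: divide_nonpos_pos)
    finally show ?thesis .
  qed
  then show ?thesis
    by (intro exI[of _ "max 1 (- \<phi> r / d)"]) auto
qed

lemma alpha_div_tendsto_zero: "((\<lambda>x. \<alpha> x / x) \<longlongrightarrow> 0) (at 0)"
  unfolding LIM_eq
proof (intro allI impI)
  fix R :: real assume R: "R > 0"
  obtain d where d: "d > 0" "\<And>x. 0 < x \<Longrightarrow> x \<le> d \<Longrightarrow> - (R / 2) * x \<le> \<alpha> x"
    using alpha_ge_linear[of "R / 2"] R by auto
  have "norm (\<alpha> x / x - 0) < R" if x: "x \<noteq> 0" "norm (x - 0) < d" for x
  proof -
    have "- (R / 2) * \<bar>x\<bar> \<le> \<alpha> x"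
      using d(2)[of "\<bar>x\<bar>"] x by (simp add: alpha_abs)
    then have "\<bar>\<alpha> x\<bar> \<le> R / 2 * \<bar>x\<bar>"
      using alpha_nonpos[of x] by simp
    then have "\<bar>\<alpha> x / x\<bar> \<le> R / 2"
      using x by (simp add: abs_divide divide_le_eq)
    then show ?thesis
      using R by (simp only: real_norm_def diff_zero)
  qed
  then show "\<exists>s>0. \<forall>x. x \<noteq> 0 \<and> norm (x - 0) < s \<longrightarrow> norm (\<alpha> x / x - 0) < R"
    using d by blast
qed

end

theorem lemma6p1:
  fixes \<phi> :: "real \<Rightarrow> real" and r :: real
  assumes r_pos: "r > 0"
    and phi_nonpos: "\<forall>x\<in>{0..r}. \<phi> x \<le> 0"
    and phi_noninc: "\<forall>x\<in>{0..r}. \<forall>y\<in>{0..r}. x \<le> y \<longrightarrow> \<phi> y \<le> \<phi> x"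
    and phi_lim: "((\<lambda>x. \<phi> x / x) \<longlongrightarrow> 0) (at_right 0)"
  defines "\<alpha> \<equiv> alpha_fun \<phi> r"
  shows "(\<exists>L. L-lipschitz_on UNIV \<alpha>)
      \<and> ((\<lambda>x. \<alpha> x / x) \<longlongrightarrow> 0) (at 0)
      \<and> (\<forall>x y. 0 < x \<and> x \<le> y \<and> \<alpha> differentiable (at x) \<and> \<alpha> differentiable (at y)
              \<longrightarrow> deriv \<alpha> x / x \<le> deriv \<alpha> y / y)
      \<and> (\<integral>\<^sup>+ x\<in>{0<..}. ennreal (- \<alpha> x / x\<^sup>2) \<partial>lborel)
          \<le> ennreal (- 2 * \<phi> r / r) + 3 * (\<integral>\<^sup>+ x\<in>{0<..r}. ennreal (- \<phi> x / x\<^sup>2) \<partial>lborel)"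
proof -
  interpret sublinear_parabola_envelope \<phi> r
    using assms by unfold_locales auto
  obtain K where "0 \<le> K" "\<forall>x>0. - alpha_fun \<phi> r x \<le> K * x"
    using alpha_linear_bound by blast
  then have "(3 * K)-lipschitz_on UNIV (alpha_fun \<phi> r)"
    by (rule lipschitz_on_alpha)
  then show ?thesis
    unfolding \<alpha>_def
    using alpha_div_tendsto_zero deriv_alpha_div_mono nn_integral_neg_alpha_div_square_le by blast
qed

end
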